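(* The separable closure $\mathbb F^{sep}$ of $\mathbb F$ is contained in $\mathcal U(\mathbb F)^{sep}_{ultra}=\prod_{s}\mathfrak F_s^{sep}/\mathcal D$. Equivalently, every $\alpha\in\mathbb F^{sep}$ can be written $\alpha=\mathrm{ulim}_s\alpha_s$ with $\alpha_s\in\mathfrak F_s^{sep}$ for $\mathcal D$-almost all $s$.
   Context: Let $S$ be an infinite set, $\mathcal D$ a nonprincipal ultrafilter on $S$; ultraproducts $\prod_sA_s/\mathcal D$ consist of tuples modulo agreement on a set in $\mathcal D$, with classes written $\mathrm{ulim}_sa_s$ and componentwise operations; "for $\mathcal D$-almost all $s$" means on a set belonging to $\mathcal D$. For each $s$ let $\mathbb F_s$ be a field, $\mathfrak F_s=\mathbb F_s(t)$; $\mathfrak K=\prod_s\mathbb F_s/\mathcal D$, $\mathbb F=\mathfrak K(t)$, viewed as a subfield of $\mathcal U(\mathbb F)=\prod_s\mathfrak F_s/\mathcal D$ via $\sum_i(\mathrm{ulim}_sa_{i,s})t^i\mapsto\mathrm{ulim}_s\sum_ia_{i,s}t^i$ (and quotients). For each $s$ fix an algebraic closure $\mathfrak F_s^{alg}$ and the separable closure $\mathfrak F_s^{sep}\subseteq\mathfrak F_s^{alg}$. Then $\mathcal U(\mathbb F)^{alg}_{ultra}=\prod_s\mathfrak F_s^{alg}/\mathcal D$ is an algebraically closed field containing $\mathcal U(\mathbb F)$; $\mathbb F^{alg}$ denotes the set of elements of $\mathcal U(\mathbb F)^{alg}_{ultra}$ algebraic over $\mathbb F$ (an algebraic closure of $\mathbb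 F$), and $\mathbb F^{sep}$ the separable closure of $\mathbb F$ inside $\mathbb F^{alg}$. *)

theory Defs
  imports "HOL-Algebra.Algebraic_Closure" "HOL-Algebra.Finite_Extensions" "HOL-Algebra.Generated_Fields"
begin

definition is_ultrafilter :: "'s filter \<Rightarrow> bool" where
  "is_ultrafilter D \<longleftrightarrow> D \<noteq> bot \<and> (\<forall>P. eventually P D \<or> eventually (\<lambda>x. \<not> P x) D)"

definition nonprincipal :: "'s filter \<Rightarrow> bool" where
  "nonprincipal D \<longleftrightarrow> (\<forall>x. \<not> eventually (\<lambda>y. y = x) D)"

definition ulim :: "'s filter \<Rightarrow> ('s \<Rightarrow> 'a) \<Rightarrow> ('s \<Rightarrow> 'a) set" where
  "ulim D f = {g. \<forall>\<^sub>F s in D. g s = f s}"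

definition urep :: "('s \<Rightarrow> 'a) set \<Rightarrow> 's \<Rightarrow> 'a" where
  "urep A = (SOME f. f \<in> A)"

definition ultraprod :: "('s \<Rightarrow> ('a, 'b) ring_scheme) \<Rightarrow> 's filter \<Rightarrow> ('s \<Rightarrow> 'a) set ring" where
  "ultraprod L D =
     \<lparr> carrier = ulim D ` {f. \<forall>s. f s \<in> carrier (L s)},
       monoid.mult = (\<lambda>A B. ulim D (\<lambda>s. urep A s \<otimes>\<^bsub>L s\<^esub> urep B s)),
       one = ulim D (\<lambda>s. \<one>\<^bsub>L s\<^esub>),
       zero = ulim D (\<lambda>s. \<zero>\<^bsub>L s\<^esub>),
       add = (\<lambda>A B. ulim D (\<lambda>s. urep A s \<oplus>\<^bsub>L s\<^esub> urep B s)) \<rparr>"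

text \<open>Formal derivative of a polynomial in HOL-Algebra list representation
  (highest coefficient first): [a_n, ..., a_0] maps to [n a_n, ..., 1 a_1].\<close>
definition lderiv :: "('a, 'b) ring_scheme \<Rightarrow> 'a list \<Rightarrow> 'a list" where
  "lderiv R p = map (\<lambda>(i, a). add_pow R i a) (zip (rev [1..<length p]) (butlast p))"

text \<open>x is separable (algebraic) over the subfield K of R: x is a root of a nonzero
  polynomial over K having no repeated root in R (R will always be algebraically closed,
  so this is "root of a separable polynomial over K").\<close>
definition separable_over :: "('a, 'b) ring_scheme \<Rightarrow> 'a set \<Rightarrow> 'a \<Rightarrow> bool" where
  "separable_over R K x \<longleftrightarrow> x \<in> carrier R \<and>
     (\<exists>p \<in> carrier (K[X]\<^bsub>R\<^esub>). p \<noteq> [] \<and> ring.eval R p x = \<zero>\<^bsub>R\<^esub> \<and>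
        (\<forall>y \<in> carrier R. ring.eval R p y = \<zero>\<^bsub>R\<^esub> \<longrightarrow> ring.eval R (lderiv R p) y \<noteq> \<zero>\<^bsub>R\<^esub>))"

end

theory Submission
  imports Defs
begin

text \<open>
  The ultralimits of families lying D-almost everywhere in the fields \<open>F\<^sub>s(t)\<close> form a
  subfield of the ultraproduct containing the ultralimits of the \<open>F\<^sub>s\<close> and of \<open>t\<close>, hence
  containing the field they generate. So a separable polynomial over that field has
  coefficients that are ultralimits of families in \<open>F\<^sub>s(t)\<close>, and by Los's theorem the component
  polynomials, for D-almost all \<open>s\<close>, have nonzero leading coefficient, vanish at the
  components of \<open>\<alpha>\<close>, and share no root with their derivatives: D-many common roots would
  assemble into a common root upstairs.
\<close>

lemma ulim_eq_iff: "ulim D f = ulim D g \<longleftrightarrow> (\<forall>\<^sub>F s in D. f s = g s)"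
proof
  assume "ulim D f = ulim D g"
  moreover have "f \<in> ulim D f" by (simp add: ulim_def)
  ultimately show "\<forall>\<^sub>F s in D. f s = g s" by (simp add: ulim_def)
next
  assume "\<forall>\<^sub>F s in D. f s = g s"
  then show "ulim D f = ulim D g"
    unfolding ulim_def by (auto elim: eventually_elim2)
qed

lemma urep_ulim: "\<forall>\<^sub>F s in D. urep (ulim D f) s = f s"
proof -
  have "urep (ulim D f) \<in> ulim D f"
    unfolding urep_def by (rule someI[where x=f]) (simp add: ulim_def)
  then show ?thesis by (simp add: ulim_def)
qed

lemma ultraprod_add: "ulim D f \<oplus>\<^bsub>ultraprod L D\<^esub> ulim D g = ulim D (\<lambda>s. f s \<oplus>\<^bsub>L s\<^esub> g s)"
  using urep_ulim[of D f] urep_ulim[of D g]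
  by (simp add: ultraprod_def ulim_eq_iff) (auto elim: eventually_elim2)

lemma ultraprod_mult: "ulim D f \<otimes>\<^bsub>ultraprod L D\<^esub> ulim D g = ulim D (\<lambda>s. f s \<otimes>\<^bsub>L s\<^esub> g s)"
  using urep_ulim[of D f] urep_ulim[of D g]
  by (simp add: ultraprod_def ulim_eq_iff) (auto elim: eventually_elim2)

lemma ultraprod_zero: "\<zero>\<^bsub>ultraprod L D\<^esub> = ulim D (\<lambda>s. \<zero>\<^bsub>L s\<^esub>)"
  by (simp add: ultraprod_def)

lemma ultraprod_one: "\<one>\<^bsub>ultraprod L D\<^esub> = ulim D (\<lambda>s. \<one>\<^bsub>L s\<^esub>)"
  by (simp add: ultraprod_def)

lemma ulim_in_ultraprod_carrier: "(\<And>s. f s \<in> carrier (L s)) \<Longrightarrow> ulim D f \<in> carrier (ultraprod L D)"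
  by (simp add: ultraprod_def)

lemma ultraprod_carrierE:
  assumes "x \<in> carrier (ultraprod L D)"
  obtains f where "x = ulim D f" "\<forall>s. f s \<in> carrier (L s)"
  using assms by (auto simp: ultraprod_def)

lemmas ultraprod_simps = ultraprod_add ultraprod_mult ultraprod_zero ultraprod_one

lemma ring_ultraprod:
  assumes R: "\<And>s. ring (L s)"
  shows "ring (ultraprod L D)"
proof (rule ringI)
  show "abelian_group (ultraprod L D)"
  proof (rule abelian_groupI)
    fix x assume "x \<in> carrier (ultraprod L D)"
    then obtain f where f: "x = ulim D f" "\<forall>s. f s \<in> carrier (L s)" by (rule ultraprod_carrierE)
    then show "\<exists>y\<in>carrier (ultraprod L D). y \<oplus>\<^bsub>ultraprod L D\<^esub> x = \<zero>\<^bsub>ultraprod L D\<^esub>"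
      by (intro bexI[of _ "ulim D (\<lambda>s. \<ominus>\<^bsub>L s\<^esub> f s)"] ulim_in_ultraprod_carrier)
        (simp_all add: ultraprod_simps ring.ring_simprules[OF R])
  qed (auto elim!: ultraprod_carrierE intro!: ulim_in_ultraprod_carrier arg_cong[where f="ulim D"] ext
        simp: ultraprod_simps ring.ring_simprules[OF R])
qed (auto elim!: ultraprod_carrierE intro!: monoidI ulim_in_ultraprod_carrier arg_cong[where f="ulim D"] ext
      simp: ultraprod_simps ring.ring_simprules[OF R] monoid.r_one[OF ring.is_monoid[OF R]])

lemma ultraprod_pow: "ulim D f [^]\<^bsub>ultraprod L D\<^esub> (n::nat) = ulim D (\<lambda>s. f s [^]\<^bsub>L s\<^esub> n)"
  by (induct n) (simp_all add: ultraprod_simps)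

lemma ultraprod_add_pow: "[(n::nat)] \<cdot>\<^bsub>ultraprod L D\<^esub> ulim D f = ulim D (\<lambda>s. [n] \<cdot>\<^bsub>L s\<^esub> f s)"
  unfolding add_pow_def by (induct n) (simp_all add: ultraprod_simps)

lemma ultraprod_eval:
  assumes R: "\<And>s. ring (L s)"
  shows "ring.eval (ultraprod L D) (map (ulim D) fs) (ulim D a)
       = ulim D (\<lambda>s. ring.eval (L s) (map (\<lambda>f. f s) fs) (a s))"
  by (induct fs) (simp_all add: ring.eval.simps[OF ring_ultraprod[OF R]] ring.eval.simps[OF R]
      ultraprod_simps ultraprod_pow)

lemma ultraprod_eval_lderiv:
  assumes R: "\<And>s. ring (L s)"
  shows "ring.eval (ultraprod L D) (lderiv (ultraprod L D) (map (ulim D) fs)) (ulim D a)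
       = ulim D (\<lambda>s. ring.eval (L s) (lderiv (L s) (map (\<lambda>f. f s) fs)) (a s))"
proof -
  define dfs where "dfs = map (\<lambda>(i, f) s. [i] \<cdot>\<^bsub>L s\<^esub> f s) (zip (rev [1..<length fs]) (butlast fs))"
  have "lderiv (ultraprod L D) (map (ulim D) fs) = map (ulim D) dfs"
    unfolding lderiv_def dfs_def by (simp add: map_butlast[symmetric] zip_map2 ultraprod_add_pow split_def)
  moreover have "map (\<lambda>g. g s) dfs = lderiv (L s) (map (\<lambda>f. f s) fs)" for s
    unfolding lderiv_def dfs_def by (simp add: map_butlast[symmetric] zip_map2 split_def)
  ultimately show ?thesis by (simp add: ultraprod_eval[OF R])
qed

lemma ultrafilter_not_eventually:
  "is_ultrafilter D \<Longrightarrow> \<not> eventually P D \<Longrightarrow> eventually (\<lambda>x. \<not> P x) D"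
  unfolding is_ultrafilter_def by blast

lemma ultraprod_nonzero:
  "is_ultrafilter D \<Longrightarrow> ulim D f \<noteq> \<zero>\<^bsub>ultraprod L D\<^esub> \<Longrightarrow> \<forall>\<^sub>F s in D. f s \<noteq> \<zero>\<^bsub>L s\<^esub>"
  by (simp add: ultraprod_zero ulim_eq_iff ultrafilter_not_eventually)

lemma ultraprod_witness:
  assumes "\<forall>\<^sub>F s in D. \<exists>y \<in> carrier (L s). P s y" and "\<And>s. carrier (L s) \<noteq> {}"
  obtains y where "\<forall>s. y s \<in> carrier (L s)" and "\<forall>\<^sub>F s in D. P s (y s)"
proof -
  have "\<forall>s. \<exists>z \<in> carrier (L s). (\<exists>y \<in> carrier (L s). P s y) \<longrightarrow> P s z"
    using assms(2) by blast
  then obtain y where "\<And>s. y s \<in> carrier (L s) \<and> ((\<exists>z \<in> carrier (L s). P s z) \<longrightarrow> P s (y s))"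
    by metis
  moreover from assms(1) have "\<forall>\<^sub>F s in D. P s (y s)"
    by (rule eventually_mono) (use calculation in blast)
  ultimately show ?thesis using that by blast
qed

lemma ultraprod_a_inv:
  assumes R: "\<And>s. ring (L s)" and f: "\<And>s. f s \<in> carrier (L s)"
  shows "\<ominus>\<^bsub>ultraprod L D\<^esub> ulim D f = ulim D (\<lambda>s. \<ominus>\<^bsub>L s\<^esub> f s)"
proof (rule abelian_group.minus_equality[OF ring.is_abelian_group[OF ring_ultraprod[OF R]]])
  show "ulim D (\<lambda>s. \<ominus>\<^bsub>L s\<^esub> f s) \<oplus>\<^bsub>ultraprod L D\<^esub> ulim D f = \<zero>\<^bsub>ultraprod L D\<^esub>"
    by (simp add: ultraprod_simps ring.ring_simprules[OF R] f)
qed (simp_all add: ulim_in_ultraprod_carrier ring.ring_simprules[OF R] f)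

lemma ultraprod_m_inv:
  assumes F: "\<And>s. field (L s)" and f: "\<And>s. f s \<in> carrier (L s)"
    and nz: "\<forall>\<^sub>F s in D. f s \<noteq> \<zero>\<^bsub>L s\<^esub>"
  defines "g \<equiv> \<lambda>s. if f s = \<zero>\<^bsub>L s\<^esub> then \<zero>\<^bsub>L s\<^esub> else inv\<^bsub>L s\<^esub> f s"
  shows "inv\<^bsub>ultraprod L D\<^esub> ulim D f = ulim D g"
proof -
  note R = field.is_ring[OF F]
  have g: "g s \<in> carrier (L s)" "f s \<noteq> \<zero>\<^bsub>L s\<^esub> \<Longrightarrow> f s \<otimes>\<^bsub>L s\<^esub> g s = \<one>\<^bsub>L s\<^esub> \<and> g s \<otimes>\<^bsub>L s\<^esub> f s = \<one>\<^bsub>L s\<^esub>" for s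
    using ring.subfield_m_inv[OF R field.carrier_is_subfield[OF F], of "f s"] f
    by (auto simp: g_def ring.ring_simprules[OF R])
  show ?thesis
  proof (rule monoid.inv_char[OF ring.is_monoid[OF ring_ultraprod[OF R]]])
    show "ulim D f \<otimes>\<^bsub>ultraprod L D\<^esub> ulim D g = \<one>\<^bsub>ultraprod L D\<^esub>"
         "ulim D g \<otimes>\<^bsub>ultraprod L D\<^esub> ulim D f = \<one>\<^bsub>ultraprod L D\<^esub>"
      unfolding ultraprod_simps ulim_eq_iff using nz by (auto elim: eventually_mono simp: g)
  qed (simp_all add: ulim_in_ultraprod_carrier f g)
qed

definition ultraprod_set :: "('s \<Rightarrow> ('a, 'b) ring_scheme) \<Rightarrow> 's filter \<Rightarrow> ('s \<Rightarrow> 'a set) \<Rightarrow> ('s \<Rightarrow> 'a) set set"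
  where "ultraprod_set L D G = {ulim D f | f. (\<forall>s. f s \<in> carrier (L s)) \<and> (\<forall>\<^sub>F s in D. f s \<in> G s)}"

lemma ultraprod_setI:
  "(\<And>s. f s \<in> carrier (L s)) \<Longrightarrow> \<forall>\<^sub>F s in D. f s \<in> G s \<Longrightarrow> ulim D f \<in> ultraprod_set L D G"
  unfolding ultraprod_set_def by blast

lemma ultraprod_setE:
  assumes "x \<in> ultraprod_set L D G"
  obtains f where "x = ulim D f" "\<forall>s. f s \<in> carrier (L s)" "\<forall>\<^sub>F s in D. f s \<in> G s"
  using assms unfolding ultraprod_set_def by blast

lemma ulim_image_subset_ultraprod_set:
  assumes "\<And>s. A s \<subseteq> carrier (L s)" and "\<And>s. A s \<subseteq> G s"
  shows "ulim D ` {f. \<forall>s. f s \<in> A s} \<subseteq> ultraprod_set L D G"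
  using assms by (blast intro: ultraprod_setI always_eventually)

lemma ultraprod_set_one:
  assumes R: "\<And>s. ring (L s)" and G: "\<And>s. subring (G s) (L s)"
  shows "\<one>\<^bsub>ultraprod L D\<^esub> \<in> ultraprod_set L D G"
  unfolding ultraprod_one
  by (rule ultraprod_setI) (simp_all add: ring.ring_simprules[OF R] subringE(3)[OF G])

lemma ultraprod_set_add_closed:
  assumes R: "\<And>s. ring (L s)" and G: "\<And>s. subring (G s) (L s)"
    and "x \<in> ultraprod_set L D G" "y \<in> ultraprod_set L D G"
  shows "x \<oplus>\<^bsub>ultraprod L D\<^esub> y \<in> ultraprod_set L D G"
proof -
  obtain f where "x = ulim D f" "\<forall>s. f s \<in> carrier (L s)" "\<forall>\<^sub>F s in D. f s \<in> G s"
    using assms(3) by (rule ultraprod_setE)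
  moreover obtain g where "y = ulim D g" "\<forall>s. g s \<in> carrier (L s)" "\<forall>\<^sub>F s in D. g s \<in> G s"
    using assms(4) by (rule ultraprod_setE)
  ultimately show ?thesis
    by (auto simp: ultraprod_add ring.ring_simprules[OF R] subringE(7)[OF G]
        intro!: ultraprod_setI elim: eventually_elim2)
qed

lemma ultraprod_set_mult_closed:
  assumes R: "\<And>s. ring (L s)" and G: "\<And>s. subring (G s) (L s)"
    and "x \<in> ultraprod_set L D G" "y \<in> ultraprod_set L D G"
  shows "x \<otimes>\<^bsub>ultraprod L D\<^esub> y \<in> ultraprod_set L D G"
proof -
  obtain f where "x = ulim D f" "\<forall>s. f s \<in> carrier (L s)" "\<forall>\<^sub>F s in D. f s \<in> G s"
    using assms(3) by (rule ultraprod_setE)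
  moreover obtain g where "y = ulim D g" "\<forall>s. g s \<in> carrier (L s)" "\<forall>\<^sub>F s in D. g s \<in> G s"
    using assms(4) by (rule ultraprod_setE)
  ultimately show ?thesis
    by (auto simp: ultraprod_mult ring.ring_simprules[OF R] subringE(6)[OF G]
        intro!: ultraprod_setI elim: eventually_elim2)
qed

lemma ultraprod_set_a_inv_closed:
  assumes R: "\<And>s. ring (L s)" and G: "\<And>s. subring (G s) (L s)"
    and "x \<in> ultraprod_set L D G"
  shows "\<ominus>\<^bsub>ultraprod L D\<^esub> x \<in> ultraprod_set L D G"
proof -
  obtain f where f: "x = ulim D f" "\<forall>s. f s \<in> carrier (L s)" "\<forall>\<^sub>F s in D. f s \<in> G s"
    using assms(3) by (rule ultraprod_setE)
  show ?thesis
    unfolding f(1) ultraprod_a_inv[OF R f(2)[rule_format]]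
    by (rule ultraprod_setI) (use f in \<open>auto simp: ring.ring_simprules[OF R] subringE(5)[OF G]
        elim: eventually_mono\<close>)
qed

lemma ultraprod_set_m_inv_closed:
  assumes F: "\<And>s. field (L s)" and D: "is_ultrafilter D" and G: "\<And>s. subfield (G s) (L s)"
    and "x \<in> ultraprod_set L D G" "x \<noteq> \<zero>\<^bsub>ultraprod L D\<^esub>"
  shows "inv\<^bsub>ultraprod L D\<^esub> x \<in> ultraprod_set L D G"
proof -
  note R = field.is_ring[OF F]
  obtain f where f: "x = ulim D f" "\<forall>s. f s \<in> carrier (L s)" "\<forall>\<^sub>F s in D. f s \<in> G s"
    using assms(4) by (rule ultraprod_setE)
  have nz: "\<forall>\<^sub>F s in D. f s \<noteq> \<zero>\<^bsub>L s\<^esub>"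
    using ultraprod_nonzero[OF D] assms(5) f(1) by blast
  have inv: "inv\<^bsub>L s\<^esub> f s \<in> carrier (L s)" "f s \<in> G s \<Longrightarrow> inv\<^bsub>L s\<^esub> f s \<in> G s"
    if "f s \<noteq> \<zero>\<^bsub>L s\<^esub>" for s
    using ring.subfield_m_inv[OF R field.carrier_is_subfield[OF F], of "f s"]
      ring.subfield_m_inv[OF R G, of "f s"] that f(2) by auto
  show ?thesis
    unfolding f(1) ultraprod_m_inv[OF F f(2)[rule_format] nz]
  proof (rule ultraprod_setI)
    show "\<forall>\<^sub>F s in D. (if f s = \<zero>\<^bsub>L s\<^esub> then \<zero>\<^bsub>L s\<^esub> else inv\<^bsub>L s\<^esub> f s) \<in> G s"
      using eventually_conj[OF f(3) nz] by (rule eventually_mono) (simp add: inv)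
  qed (simp add: inv ring.ring_simprules[OF R])
qed

lemma generate_field_subset_ultraprod_set:
  assumes F: "\<And>s. field (L s)" and D: "is_ultrafilter D"
    and G: "\<And>s. subfield (G s) (L s)" and H: "H \<subseteq> ultraprod_set L D G"
  shows "generate_field (ultraprod L D) H \<subseteq> ultraprod_set L D G"
proof
  note R = field.is_ring[OF F] and G_subring = subfieldE(1)[OF G]
  fix x assume "x \<in> generate_field (ultraprod L D) H"
  then show "x \<in> ultraprod_set L D G"
  proof (induction rule: generate_field.induct)
    case (incl h)
    with H show ?case by blast
  qed (auto intro: ultraprod_set_one[OF R G_subring] ultraprod_set_add_closed[OF R G_subring]
      ultraprod_set_mult_closed[OF R G_subring] ultraprod_set_a_inv_closed[OF R G_subring]
      ultraprod_set_m_inv_closed[OF F D G])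
qed

lemma ultraprod_set_lift_list:
  assumes "set p \<subseteq> ultraprod_set L D G"
  obtains fs where "p = map (ulim D) fs" "\<forall>\<^sub>F s in D. \<forall>f \<in> set fs. f s \<in> G s"
proof -
  have "\<forall>x \<in> set p. \<exists>f. x = ulim D f \<and> (\<forall>s. f s \<in> carrier (L s)) \<and> (\<forall>\<^sub>F s in D. f s \<in> G s)"
    using assms unfolding ultraprod_set_def by blast
  then obtain F where F: "\<And>x. x \<in> set p \<Longrightarrow>
      x = ulim D (F x) \<and> (\<forall>s. F x s \<in> carrier (L s)) \<and> (\<forall>\<^sub>F s in D. F x s \<in> G s)"
    by metis
  have "p = map (ulim D) (map F p)"
    using F by (simp add: map_idI)
  moreover have "\<forall>\<^sub>F s in D. \<forall>f \<in> set (map F p). f s \<in> G s"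
    using F by (auto intro: eventually_ball_finite)
  ultimately show ?thesis
    by (rule that)
qed

lemma eventually_no_common_root_lderiv:
  assumes D: "is_ultrafilter D" and R: "\<And>s. ring (L s)"
    and sep: "\<forall>y \<in> carrier (ultraprod L D). ring.eval (ultraprod L D) (map (ulim D) fs) y = \<zero>\<^bsub>ultraprod L D\<^esub>
      \<longrightarrow> ring.eval (ultraprod L D) (lderiv (ultraprod L D) (map (ulim D) fs)) y \<noteq> \<zero>\<^bsub>ultraprod L D\<^esub>"
  shows "\<forall>\<^sub>F s in D. \<forall>y \<in> carrier (L s). ring.eval (L s) (map (\<lambda>f. f s) fs) y = \<zero>\<^bsub>L s\<^esub>
      \<longrightarrow> ring.eval (L s) (lderiv (L s) (map (\<lambda>f. f s) fs)) y \<noteq> \<zero>\<^bsub>L s\<^esub>"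
proof (rule ccontr)
  let ?U = "ultraprod L D" and ?p = "\<lambda>s. map (\<lambda>f. f s) fs"
  let ?common_root = "\<lambda>s y. ring.eval (L s) (?p s) y = \<zero>\<^bsub>L s\<^esub>
      \<and> ring.eval (L s) (lderiv (L s) (?p s)) y = \<zero>\<^bsub>L s\<^esub>"
  assume "\<not> ?thesis"
  then have "\<forall>\<^sub>F s in D. \<exists>y \<in> carrier (L s). ?common_root s y"
    by (rule ultrafilter_not_eventually[OF D, THEN eventually_mono]) blast
  moreover have "carrier (L s) \<noteq> {}" for s
    using ring.ring_simprules(2)[OF R] by blast
  ultimately obtain y where y: "\<forall>s. y s \<in> carrier (L s)" "\<forall>\<^sub>F s in D. ?common_root s (y s)"
    by (rule ultraprod_witness)
  have "ring.eval ?U (map (ulim D) fs) (ulim D y) = \<zero>\<^bsub>?U\<^esub>"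
    unfolding ultraprod_eval[OF R] ultraprod_zero ulim_eq_iff using y(2) by (rule eventually_mono) blast
  moreover have "ring.eval ?U (lderiv ?U (map (ulim D) fs)) (ulim D y) = \<zero>\<^bsub>?U\<^esub>"
    unfolding ultraprod_eval_lderiv[OF R] ultraprod_zero ulim_eq_iff using y(2) by (rule eventually_mono) blast
  ultimately show False
    using sep ulim_in_ultraprod_carrier[of y, OF y(1)[rule_format]] by blast
qed

lemma separable_over_ultraprod:
  assumes D: "is_ultrafilter D" and R: "\<And>s. ring (L s)"
    and K: "K \<subseteq> ultraprod_set L D G" and \<alpha>: "separable_over (ultraprod L D) K \<alpha>"
  shows "\<exists>\<beta>. \<alpha> = ulim D \<beta> \<and> (\<forall>\<^sub>F s in D. separable_over (L s) (G s) (\<beta> s))"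
proof -
  let ?U = "ultraprod L D"
  obtain p where \<alpha>_carrier: "\<alpha> \<in> carrier ?U" and p: "p \<in> carrier (K[X]\<^bsub>?U\<^esub>)" "p \<noteq> []"
    and root: "ring.eval ?U p \<alpha> = \<zero>\<^bsub>?U\<^esub>"
    and sep: "\<forall>y \<in> carrier ?U. ring.eval ?U p y = \<zero>\<^bsub>?U\<^esub> \<longrightarrow> ring.eval ?U (lderiv ?U p) y \<noteq> \<zero>\<^bsub>?U\<^esub>"
    using \<alpha> unfolding separable_over_def by blast
  obtain a where a: "\<alpha> = ulim D a" "\<forall>s. a s \<in> carrier (L s)"
    using \<alpha>_carrier by (rule ultraprod_carrierE)
  have "set p \<subseteq> K" and lead: "hd p \<noteq> \<zero>\<^bsub>?U\<^esub>"
    using p by (auto simp: univ_poly_def polynomial_def)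
  with K have "set p \<subseteq> ultraprod_set L D G" by blast
  then obtain fs where fs: "p = map (ulim D) fs" "\<forall>\<^sub>F s in D. \<forall>f \<in> set fs. f s \<in> G s"
    by (rule ultraprod_set_lift_list)
  define ps where "ps s = map (\<lambda>f. f s) fs" for s
  have "fs \<noteq> []" using p(2) fs(1) by simp
  have "\<forall>\<^sub>F s in D. ring.eval (L s) (ps s) (a s) = \<zero>\<^bsub>L s\<^esub>"
    using root unfolding a(1) fs(1) ultraprod_eval[OF R] ultraprod_zero ulim_eq_iff ps_def .
  moreover have "\<forall>\<^sub>F s in D. hd (ps s) \<noteq> \<zero>\<^bsub>L s\<^esub>"
    using ultraprod_nonzero[OF D] lead \<open>fs \<noteq> []\<close> unfolding fs(1) ps_def by (simp add: hd_map)
  moreover have "\<forall>\<^sub>F s in D. \<forall>y \<in> carrier (L s). ring.eval (L s) (ps s) y = \<zero>\<^bsub>L s\<^esub>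
      \<longrightarrow> ring.eval (L s) (lderiv (L s) (ps s)) y \<noteq> \<zero>\<^bsub>L s\<^esub>"
    using sep unfolding fs(1) ps_def by (rule eventually_no_common_root_lderiv[OF D R])
  ultimately have "\<forall>\<^sub>F s in D. separable_over (L s) (G s) (a s)"
    using fs(2)
  proof eventually_elim
    case (elim s)
    moreover have "ps s \<noteq> []" using \<open>fs \<noteq> []\<close> by (simp add: ps_def)
    ultimately have "ps s \<in> carrier ((G s)[X]\<^bsub>L s\<^esub>)"
      by (auto simp: univ_poly_def polynomial_def ps_def)
    with elim \<open>ps s \<noteq> []\<close> show ?case
      using a(2) unfolding separable_over_def by blast
  qed
  with a(1) show ?thesis by blast
qed

theorem mainTheorem4:
  fixes L :: "'s \<Rightarrow> 'a ring" and Fk :: "'s \<Rightarrow> 'a set" and tt :: "'s \<Rightarrow> 'a"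
    and D :: "'s filter"
  assumes "infinite (UNIV :: 's set)"
    and "is_ultrafilter D" and "nonprincipal D"
    and "\<And>s. subfield (Fk s) (L s)"
    and "\<And>s. tt s \<in> carrier (L s)"
    and "\<And>s. ring.transcendental (L s) (Fk s) (tt s)"
    and "\<And>s. algebraic_closure (L s) (generate_field (L s) (Fk s \<union> {tt s}))"
  shows "{\<alpha>. separable_over (ultraprod L D)
               (generate_field (ultraprod L D) (ulim D ` {f. \<forall>s. f s \<in> Fk s} \<union> {ulim D tt})) \<alpha>}
         \<subseteq> {ulim D \<beta> | \<beta>. \<forall>\<^sub>F s in D.
               separable_over (L s) (generate_field (L s) (Fk s \<union> {tt s})) (\<beta> s)}"
proof -
  define G where "G s = generate_field (L s) (Fk s \<union> {tt s})" for s
  have F: "field (L s)" for s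
    using algebraic_closure.axioms(1)[OF assms(7)] .
  have gens: "Fk s \<union> {tt s} \<subseteq> carrier (L s)" for s
    using subfieldE(3)[OF assms(4)] assms(5) by blast
  have G: "subfield (G s) (L s)" for s
    unfolding G_def using gens by (rule field.generate_field_is_subfield[OF F])
  have "ulim D ` {f. \<forall>s. f s \<in> Fk s} \<union> {ulim D tt} \<subseteq> ulim D ` {f. \<forall>s. f s \<in> Fk s \<union> {tt s}}"
    by auto
  also have "\<dots> \<subseteq> ultraprod_set L D G"
    using gens unfolding G_def by (intro ulim_image_subset_ultraprod_set) (auto intro: generate_field.incl)
  finally have "generate_field (ultraprod L D) (ulim D ` {f. \<forall>s. f s \<in> Fk s} \<union> {ulim D tt})
      \<subseteq> ultraprod_set L D G"
    by (rule generate_field_subset_ultraprod_set[OF F assms(2) G])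
  from separable_over_ultraprod[OF assms(2) field.is_ring[OF F] this]
  show ?thesis unfolding G_def by blast
qed

end
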